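(* Let $n\in\mathbb N_+$ and let $\nu$ be a probability measure on $\mathbb R$ with compact support such that $\int_\mathbb R\lambda\,d\nu=0$. Let $\lambda_{\max}=\max\operatorname{supp}\nu$ and suppose $g(\lambda)=\nu\{x\ge\lambda\}^{1/n}$ is concave on $(-\infty,\lambda_{\max})$. Then $g(-t\lambda_{\max})\ge1-\frac{1}{\sqrt{nt}}$ for all $t>0$. *)

theory Defs
  imports "HOL-Probability.Probability"
begin

definition measure_support :: "real measure \<Rightarrow> real set" where
  "measure_support M = {x. \<forall>U. open U \<and> x \<in> U \<longrightarrow> emeasure M U > 0}"

end

theory Submission
  imports Defs
begin

text \<open>Since \<open>\<nu>\<close> lives on \<open>(-\<infinity>, \<lambda>\<^sub>m\<^sub>a\<^sub>x]\<close>, splitting the mean at \<open>a = -t\<lambda>\<^sub>m\<^sub>a\<^sub>x\<close> gives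
  \<open>0 \<le> a + (\<lambda>\<^sub>m\<^sub>a\<^sub>x - a) p\<close> with \<open>p = \<nu>{x \<ge> a}\<close>, i.e. \<open>p \<ge> t/(1+t)\<close>.
  With \<open>x = 1/(nt)\<close>, Bernoulli's inequality gives \<open>(1 - x)\<^sup>n \<le> 1/(1 + nx) = t/(1+t) \<le> p\<close>,
  and \<open>x \<le> 1/\<surd>(nt)\<close> once \<open>nt \<ge> 1\<close>.\<close>

lemma AE_in_measure_support:
  fixes M :: "real measure"
  assumes "sets M = sets borel"
  shows "AE x in M. x \<in> measure_support M"
proof -
  define F where "F = {U::real set. open U \<and> emeasure M U = 0}"
  have compl: "- measure_support M = \<Union>F"
    unfolding F_def measure_support_def by (auto simp: not_gr_zero)
  obtain F' where F': "F' \<subseteq> F" "countable F'" "\<Union>F' = \<Union>F"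
    using Lindelof[of F] unfolding F_def by blast
  have "\<Union>(id ` F') \<in> null_sets M"
  proof (rule null_sets_UN')
    fix U assume "U \<in> F'"
    then have "open U" "emeasure M U = 0" using F' unfolding F_def by auto
    then show "id U \<in> null_sets M" using assms by (simp add: null_sets_def)
  qed fact
  then have "- measure_support M \<in> null_sets M" using compl F' by simp
  then show ?thesis by (rule AE_I') auto
qed

context prob_space
begin

lemma expectation_le_upper_tail:
  assumes X: "integrable M X" and le_L: "AE x in M. X x \<le> L"
  shows "expectation X \<le> a + (L - a) * prob {x \<in> space M. a \<le> X x}"
proof -
  define T where "T = {x \<in> space M. a \<le> X x}"
  have T: "T \<in> events" unfolding T_def using borel_measurable_integrable[OF X] by measurable
  have "integrable M (indicator T :: 'a \<Rightarrow> real)"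
    using T by (intro integrable_real_indicator) (auto simp: emeasure_space_1 less_top[symmetric])
  then have step: "integrable M (\<lambda>x. (L - a) * indicator T x)" by simp
  then have ind: "integrable M (\<lambda>x. a + (L - a) * indicator T x)" by simp
  have "expectation X \<le> (\<integral>x. a + (L - a) * indicator T x \<partial>M)"
    using le_L by (intro integral_mono_AE[OF X ind]) (auto simp: T_def indicator_def elim!: eventually_mono)
  also have "\<dots> = a + (L - a) * prob T"
    using T step by (simp add: Bochner_Integration.integral_add prob_space)
  finally show ?thesis unfolding T_def .
qed

lemma mean_zero_upper_tail_ge:
  assumes X: "integrable M X" and mean0: "expectation X = 0"
    and le_L: "AE x in M. X x \<le> L" and t: "t > 0"
  shows "t / (1 + t) \<le> prob {x \<in> space M. - t * L \<le> X x}"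
proof -
  have "0 \<le> L" using expectation_le_upper_tail[OF X le_L, of L] mean0 by simp
  then consider "L = 0" | "L > 0" by linarith
  then show ?thesis
  proof cases
    case 1 \<comment> \<open>splitting at \<open>a = 0\<close> says nothing; instead \<open>X = 0\<close> almost surely\<close>
    have "AE x in M. - X x = 0"
      using 1 le_L mean0 X by (subst integral_nonneg_eq_0_iff_AE[symmetric]) auto
    then have "prob {x \<in> space M. 0 \<le> X x} = 1"
      using borel_measurable_integrable[OF X] by (subst prob_Collect_eq_1) (auto elim: eventually_mono)
    then show ?thesis using 1 t by simp
  next
    case 2
    define p where "p = prob {x \<in> space M. - t * L \<le> X x}"
    have "0 \<le> - t * L + (L + t * L) * p"
      using expectation_le_upper_tail[OF X le_L, of "- t * L"] mean0 unfolding p_def by simp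
    then have "L * t \<le> L * ((1 + t) * p)" by (simp add: algebra_simps)
    then have "t \<le> (1 + t) * p" using 2 by simp
    then show ?thesis using t unfolding p_def by (simp add: pos_divide_le_eq mult.commute)
  qed
qed

end

lemma one_minus_power_mult_le_one:
  fixes x :: real
  assumes "0 \<le> x" "x \<le> 1"
  shows "(1 - x) ^ n * (1 + real n * x) \<le> 1"
proof -
  have "(1 - x) ^ n * (1 + real n * x) \<le> (1 - x) ^ n * (1 + x) ^ n"
    using Bernoulli_inequality[of x n] assms by (intro mult_left_mono) auto
  also have "\<dots> = (1 - x * x) ^ n" by (simp add: power_mult_distrib[symmetric] algebra_simps)
  also have "\<dots> \<le> 1" using assms by (intro power_le_one) (auto simp: mult_le_one)
  finally show ?thesis .
qed

lemma root_ge_one_minus_inverse_sqrt: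
  fixes p t :: real
  assumes n: "n > 0" and t: "t > 0" and p: "t / (1 + t) \<le> p"
  shows "1 - 1 / sqrt (real n * t) \<le> p powr (1 / real n)"
proof (cases "real n * t \<le> 1")
  case True
  then show ?thesis using n t by (simp add: order.trans[OF _ powr_ge_zero])
next
  case False
  define x where "x = 1 / (real n * t)"
  have x: "0 < x" "x < 1" using False n t unfolding x_def by auto
  have "(1 - x) ^ n * (1 + 1 / t) \<le> 1"
    using one_minus_power_mult_le_one[of x n] x n unfolding x_def by simp
  then have "(1 - x) ^ n \<le> t / (1 + t)" using t by (simp add: field_simps)
  also note p
  finally have "(1 - x) ^ n \<le> p" .
  have "1 - x = ((1 - x) ^ n) powr (1 / real n)"
    using x n by (simp add: powr_realpow[symmetric] powr_powr)
  also have "\<dots> \<le> p powr (1 / real n)"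
    using \<open>(1 - x) ^ n \<le> p\<close> x by (intro powr_mono2) auto
  finally have "1 - x \<le> p powr (1 / real n)" .
  moreover have "x \<le> 1 / sqrt (real n * t)"
  proof -
    have "sqrt (real n * t) * 1 \<le> sqrt (real n * t) * sqrt (real n * t)"
      using False by (intro mult_left_mono) auto
    then have "sqrt (real n * t) \<le> real n * t" using n t by simp
    then show ?thesis using False unfolding x_def by (intro divide_left_mono) auto
  qed
  ultimately show ?thesis by linarith
qed

theorem mainTheorem12:
  fixes M :: "real measure" and n :: nat
  assumes n_pos: "n > 0"
    and prob: "prob_space M"
    and borel: "sets M = sets borel"
    and cpt: "compact (measure_support M)"
    and mean0: "(\<integral>x. x \<partial>M) = 0"
    and conc: "concave_on {..<Sup (measure_support M)}
                 (\<lambda>l. (measure M {x. x \<ge> l}) powr (1 / real n))"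
  shows "\<forall>t::real. t > 0 \<longrightarrow>
           (measure M {x. x \<ge> - t * Sup (measure_support M)}) powr (1 / real n)
             \<ge> 1 - 1 / sqrt (real n * t)"
proof (intro allI impI)
  fix t :: real assume t: "t > 0"
  interpret prob_space M by (rule prob)
  have supp: "AE x in M. x \<in> measure_support M" using AE_in_measure_support[OF borel] .
  obtain B where B: "\<forall>x\<in>measure_support M. norm x \<le> B"
    using compact_imp_bounded[OF cpt] unfolding bounded_iff by blast
  have le_Sup: "AE x in M. x \<le> Sup (measure_support M)"
    using supp by (rule eventually_mono)
      (simp add: cSup_upper bounded_imp_bdd_above compact_imp_bounded[OF cpt])
  have "integrable M (\<lambda>x. x)"
    using supp B measurable_ident_sets[OF borel]
    by (intro integrable_const_bound[where B=B]) (auto elim!: eventually_mono)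
  from mean_zero_upper_tail_ge[OF this mean0 le_Sup t]
  have "t / (1 + t) \<le> measure M {x. - t * Sup (measure_support M) \<le> x}"
    using sets_eq_imp_space_eq[OF borel] by simp
  then show "1 - 1 / sqrt (real n * t)
      \<le> measure M {x. x \<ge> - t * Sup (measure_support M)} powr (1 / real n)"
    by (rule root_ge_one_minus_inverse_sqrt[OF n_pos t])
qed

end
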